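(* Let $\mathbb{F}\in\{\mathbb{R},\mathbb{C}\}$, let $A_1,A_2,\ldots$ be a sequence of matrices in $\mathbb{F}^{n\times n}$, let $H$ be a subspace of $\mathbb{F}^n$ invariant under every $A_i$, and let $\nu$ be a vector norm on $\mathbb{F}^n$. Suppose that $\sum_{i=1}^\infty(\max(\nu^0_H(A_i),1)-1)$ converges and that $\sum_{i=1}^\infty(1-\min(\nu^0_H(A_i),1))$ diverges. Let $(C_{p,r})_{r\ge1}$ be any sequence of general products from $A_1,A_2,\ldots$ (as defined below). Then for every $x\in H$, $\lim_{r\to\infty}C_{p,r}x=0$.
   Context: For a subspace $H$ invariant under $A$, the partial norm is $\nu^0_H(A)=\sup_{0\neq x\in H}\nu(Ax)/\nu(x)$ (the operator norm of the restriction of $A$ to $H$). General products: given a permutation $\sigma$ of the positive integers, set $B_i=A_{\sigma(i)}$; for an integer $p\ge0$ and each $r\ge1$, $C_{p,r}$ is a product of the matrices $B_{p+1},\ldots,B_{p+r}$, each used exactly once, taken in some order (the order may be chosen arbitrarily and independently for each $r$). *)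

theory Defs
  imports "HOL-Analysis.Analysis"
begin

text \<open>The scalar field F ranges over the real normed fields (which are exactly R and C up to
  isomorphism); vectors in F^n are of type 'f^'n, matrices of type 'f^'n^'n.\<close>

definition is_vector_norm :: "('f::real_normed_field ^ 'n \<Rightarrow> real) \<Rightarrow> bool" where
  "is_vector_norm \<nu> \<longleftrightarrow>
     (\<forall>x. 0 \<le> \<nu> x) \<and> (\<forall>x. \<nu> x = 0 \<longleftrightarrow> x = 0) \<and>
     (\<forall>c x. \<nu> (c *s x) = norm c * \<nu> x) \<and> (\<forall>x y. \<nu> (x + y) \<le> \<nu> x + \<nu> y)"

definition partial_norm ::
    "('f::real_normed_field ^ 'n \<Rightarrow> real) \<Rightarrow> ('f ^ 'n) set \<Rightarrow> 'f ^ 'n ^ 'n \<Rightarrow> real" where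
  "partial_norm \<nu> H A = (SUP x \<in> H - {0}. \<nu> (A *v x) / \<nu> x)"

definition mat_prod_list :: "('a::semiring_1 ^ 'n ^ 'n) list \<Rightarrow> 'a ^ 'n ^ 'n" where
  "mat_prod_list Ms = foldr (**) Ms (mat 1)"

end

theory Submission
  imports Defs
begin

(* Partial norms are submultiplicative along the invariant subspace H, and the order of the
   factors in C_{p,r} is irrelevant to that bound, so nu (C_{p,r} x) <= prod_{k<r} c_{p+k} * nu x
   <= exp (sum_{k<r} (c_{p+k} - 1)) * nu x, where c_k is the partial norm of A_{sigma(k+1)}.
   Split c - 1 into the excess max c 1 - 1 and the deficit 1 - min c 1: both series are
   nonnegative, so the rearrangement by sigma keeps the excess summable and the deficit
   divergent, and dropping the first p terms changes neither. Hence the exponent tends to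
   minus infinity. Finally nu dominates a multiple of the Euclidean norm, since F is complete,
   so nu (C_{p,r} x) -> 0 forces C_{p,r} x -> 0. *)

lemma mat_prod_list_mult_mem:
  assumes "\<forall>M\<in>set Ms. \<forall>y\<in>H. M *v y \<in> H" and "x \<in> H"
  shows "mat_prod_list Ms *v x \<in> H"
  using assms by (induction Ms) (simp_all add: mat_prod_list_def matrix_vector_mul_assoc[symmetric])

lemma norm_axis: "norm (axis j t :: 'a::real_normed_field ^ 'n) = norm t"
proof -
  have eq: "(\<lambda>i. norm ((axis j t :: 'a ^ 'n) $ i) ^ 2) = (\<lambda>i. if i = j then norm t ^ 2 else 0)"
    by (auto simp: axis_def)
  show ?thesis
    unfolding norm_vec_def L2_set_def eq by simp
qed

(* The field is assumed complete: that is what makes every norm on 'f ^ 'n dominate a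
   multiple of the Euclidean one (norm_le below). *)
locale vector_norm =
  fixes \<nu> :: "'f::{real_normed_field, banach} ^ 'n \<Rightarrow> real"
  assumes is_vector_norm: "is_vector_norm \<nu>"
begin

lemma nonneg: "0 \<le> \<nu> x"
  using is_vector_norm by (simp add: is_vector_norm_def)

lemma eq_0_iff [simp]: "\<nu> x = 0 \<longleftrightarrow> x = 0"
  using is_vector_norm by (simp add: is_vector_norm_def)

lemma zero [simp]: "\<nu> 0 = 0"
  by simp

lemma pos: "x \<noteq> 0 \<Longrightarrow> 0 < \<nu> x"
  by (simp add: less_le nonneg)

lemma scale: "\<nu> (c *s x) = norm c * \<nu> x"
  using is_vector_norm by (simp add: is_vector_norm_def)

lemma triangle: "\<nu> (x + y) \<le> \<nu> x + \<nu> y"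
  using is_vector_norm by (simp add: is_vector_norm_def)

lemma minus [simp]: "\<nu> (- x) = \<nu> x"
  using scale[of "-1" x] by simp

lemma diff_le: "\<nu> (x - y) \<le> \<nu> x + \<nu> y"
  using triangle[of x "- y"] by simp

lemma sum_le: "\<nu> (sum f S) \<le> (\<Sum>i\<in>S. \<nu> (f i))"
proof (induction S rule: infinite_finite_induct)
  case (insert a S)
  then show ?case using triangle[of "f a" "sum f S"] by simp
qed auto

lemma sum_scaled_le: "\<nu> (\<Sum>j\<in>UNIV. x $ j *s w j) \<le> norm x * (\<Sum>j\<in>UNIV. \<nu> (w j))"
proof -
  have "\<nu> (\<Sum>j\<in>UNIV. x $ j *s w j) \<le> (\<Sum>j\<in>UNIV. norm (x $ j) * \<nu> (w j))"
    using sum_le[of "\<lambda>j. x $ j *s w j" UNIV] by (simp add: scale)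
  also have "\<dots> \<le> (\<Sum>j\<in>UNIV. norm x * \<nu> (w j))"
    by (intro sum_mono mult_right_mono Finite_Cartesian_Product.norm_nth_le nonneg)
  finally show ?thesis
    by (simp add: sum_distrib_left)
qed

lemma le_norm: "\<exists>K\<ge>0. \<forall>x. \<nu> x \<le> K * norm x"
proof (intro exI[of _ "\<Sum>j\<in>UNIV. \<nu> (axis j 1)"] conjI allI)
  show "0 \<le> (\<Sum>j\<in>UNIV. \<nu> (axis j 1))"
    by (simp add: sum_nonneg nonneg)
  show "\<nu> x \<le> (\<Sum>j\<in>UNIV. \<nu> (axis j 1)) * norm x" for x
    using sum_scaled_le[of x "\<lambda>j. axis j 1"] by (simp add: basis_expansion mult.commute)
qed

lemma tendsto:
  assumes "X \<longlonglongrightarrow> l"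
  shows "(\<lambda>k. \<nu> (X k)) \<longlonglongrightarrow> \<nu> l"
proof -
  obtain K where K: "K \<ge> 0" "\<And>x. \<nu> x \<le> K * norm x"
    using le_norm by blast
  have "\<forall>k. norm (\<nu> (X k) - \<nu> l) \<le> K * norm (X k - l)"
  proof
    fix k
    have "\<nu> (X k) \<le> \<nu> (X k - l) + \<nu> l"
      using triangle[of "X k - l" l] by simp
    moreover have "\<nu> l \<le> \<nu> (X k - l) + \<nu> (X k)"
      using triangle[of "l - X k" "X k"] minus[of "l - X k"] by simp
    moreover have "\<nu> (X k - l) \<le> K * norm (X k - l)"
      by (rule K(2))
    ultimately show "norm (\<nu> (X k) - \<nu> l) \<le> K * norm (X k - l)"
      unfolding real_norm_def abs_le_iff by linarith
  qed
  moreover have "(\<lambda>k. K * norm (X k - l)) \<longlonglongrightarrow> 0"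
    using tendsto_mult_right_zero[OF tendsto_norm_zero[OF LIM_zero[OF assms]]] .
  ultimately have "(\<lambda>k. \<nu> (X k) - \<nu> l) \<longlonglongrightarrow> 0"
    by (rule Lim_null_comparison[OF always_eventually])
  then show ?thesis
    by (rule LIM_zero_cancel)
qed

lemma Cauchy_if_nu_add_tendsto_0:
  assumes "0 < M" and M: "\<And>x. {i. x $ i \<noteq> 0} \<subseteq> S \<Longrightarrow> norm x \<le> M * \<nu> x"
    and vs_S: "\<And>k. {i. vs k $ i \<noteq> 0} \<subseteq> S" and vs_lim: "(\<lambda>k. \<nu> (e + vs k)) \<longlonglongrightarrow> 0"
  shows "Cauchy vs"
proof (rule metric_CauchyI)
  fix \<epsilon> :: real
  assume "\<epsilon> > 0"
  then have "eventually (\<lambda>k. \<nu> (e + vs k) < \<epsilon> / (2 * M)) sequentially"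
    using order_tendstoD(2)[OF vs_lim] \<open>0 < M\<close> by simp
  then obtain N where N: "\<And>k. k \<ge> N \<Longrightarrow> \<nu> (e + vs k) < \<epsilon> / (2 * M)"
    unfolding eventually_sequentially by blast
  have "dist (vs m) (vs n) < \<epsilon>" if "m \<ge> N" "n \<ge> N" for m n
  proof -
    have "{i. (vs m - vs n) $ i \<noteq> 0} \<subseteq> {i. vs m $ i \<noteq> 0} \<union> {i. vs n $ i \<noteq> 0}"
      by auto
    then have "dist (vs m) (vs n) \<le> M * \<nu> (vs m - vs n)"
      unfolding dist_norm using vs_S[of m] vs_S[of n] by (intro M) blast
    also have "\<dots> \<le> M * (\<nu> (e + vs m) + \<nu> (e + vs n))"
      using diff_le[of "e + vs m" "e + vs n"] \<open>0 < M\<close> by simp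
    also have "\<dots> < M * (\<epsilon> / M)"
      using N[OF that(1)] N[OF that(2)] \<open>0 < M\<close> by (intro mult_strict_left_mono) simp_all
    finally show ?thesis
      using \<open>0 < M\<close> by simp
  qed
  then show "\<exists>N. \<forall>m\<ge>N. \<forall>n\<ge>N. dist (vs m) (vs n) < \<epsilon>"
    by blast
qed

(* A \<nu>-minimising sequence would be norm-Cauchy, and its limit v would satisfy
   \<nu> (axis j 1 + v) = 0 although v vanishes at j. *)
lemma axis_dist_support_pos:
  assumes "j \<notin> S" and "0 < M"
    and M: "\<And>x. {i. x $ i \<noteq> 0} \<subseteq> S \<Longrightarrow> norm x \<le> M * \<nu> x"
  shows "\<exists>\<delta>>0. \<forall>v. {i. v $ i \<noteq> 0} \<subseteq> S \<longrightarrow> \<delta> \<le> \<nu> (axis j 1 + v)"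
proof (rule ccontr)
  define e :: "'f ^ 'n" where "e = axis j 1"
  assume "\<not> ?thesis"
  then have "\<exists>v. {i. v $ i \<noteq> 0} \<subseteq> S \<and> \<nu> (e + v) < inverse (Suc k)" for k :: nat
    unfolding e_def by (meson not_le positive_imp_inverse_positive of_nat_0_less_iff zero_less_Suc)
  then obtain vs where vs_S: "\<And>k. {i. vs k $ i \<noteq> 0} \<subseteq> S"
    and vs_lt: "\<And>k. \<nu> (e + vs k) < inverse (Suc k)"
    by metis
  have "\<forall>k. norm (\<nu> (e + vs k)) \<le> inverse (Suc k)"
    using vs_lt nonneg by (simp add: less_imp_le)
  then have vs_lim: "(\<lambda>k. \<nu> (e + vs k)) \<longlonglongrightarrow> 0"
    by (rule Lim_null_comparison[OF always_eventually LIMSEQ_inverse_real_of_nat])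
  have "Cauchy vs"
    using Cauchy_if_nu_add_tendsto_0[OF \<open>0 < M\<close> M vs_S vs_lim] .
  then obtain v where v: "vs \<longlonglongrightarrow> v"
    using Cauchy_convergent_iff convergent_def by blast
  have "vs k $ j = 0" for k
    using vs_S[of k] \<open>j \<notin> S\<close> by blast
  then have "(e + v) $ j = 1"
    using tendsto_vec_nth[OF v, of j] by (simp add: e_def LIMSEQ_const_iff)
  moreover have "e + v = 0"
    using LIMSEQ_unique[OF tendsto[OF tendsto_add[OF tendsto_const v]] vs_lim] by simp
  ultimately show False
    by simp
qed

lemma coordinate_le:
  assumes "0 < \<delta>" and \<delta>: "\<And>v. {i. v $ i \<noteq> 0} \<subseteq> S \<Longrightarrow> \<delta> \<le> \<nu> (axis j 1 + v)"
    and x: "{i. x $ i \<noteq> 0} \<subseteq> insert j S"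
  shows "norm (x $ j) \<le> \<nu> x / \<delta>"
proof (cases "x $ j = 0")
  case False
  define v where "v = inverse (x $ j) *s (x - axis j (x $ j))"
  have "x = x $ j *s (axis j 1 + v)"
    using False by (simp add: v_def vec_eq_iff axis_def)
  then have "\<nu> x = norm (x $ j) * \<nu> (axis j 1 + v)"
    by (metis scale)
  moreover have "\<delta> \<le> \<nu> (axis j 1 + v)"
    using x by (intro \<delta>) (auto simp: v_def axis_def)
  ultimately show ?thesis
    using \<open>0 < \<delta>\<close> by (simp add: pos_le_divide_eq mult_left_mono)
qed (simp add: divide_nonneg_pos nonneg \<open>0 < \<delta>\<close>)

lemma norm_le_on_insert_support:
  assumes "0 < \<delta>" and \<delta>: "\<And>v. {i. v $ i \<noteq> 0} \<subseteq> S \<Longrightarrow> \<delta> \<le> \<nu> (axis j 1 + v)"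
    and "0 < M" and M: "\<And>x. {i. x $ i \<noteq> 0} \<subseteq> S \<Longrightarrow> norm x \<le> M * \<nu> x"
    and x: "{i. x $ i \<noteq> 0} \<subseteq> insert j S"
  shows "norm x \<le> (M + (M * \<nu> (axis j 1) + 1) / \<delta>) * \<nu> x"
proof -
  define t where "t = x $ j"
  define v where "v = x - axis j t"
  have axis_t: "axis j t = t *s axis j 1"
    by (simp add: vec_eq_iff axis_def)
  have "\<nu> v \<le> \<nu> x + norm t * \<nu> (axis j 1)"
    using diff_le[of x "axis j t"] by (simp add: v_def axis_t scale)
  moreover have "{i. v $ i \<noteq> 0} \<subseteq> S"
    using x by (auto simp: v_def t_def axis_def)
  then have "norm v \<le> M * \<nu> v"
    by (rule M)
  ultimately have "norm v \<le> M * (\<nu> x + norm t * \<nu> (axis j 1))"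
    using \<open>0 < M\<close> by (smt (verit) mult_left_mono)
  moreover have "norm x \<le> norm v + norm t"
    using norm_triangle_ineq[of v "axis j t"] by (simp add: v_def norm_axis)
  ultimately have "norm x \<le> M * \<nu> x + (M * \<nu> (axis j 1) + 1) * norm t"
    by (simp add: algebra_simps)
  also have "\<dots> \<le> M * \<nu> x + (M * \<nu> (axis j 1) + 1) * (\<nu> x / \<delta>)"
    using coordinate_le[OF \<open>0 < \<delta>\<close> \<delta> x] \<open>0 < M\<close>
    by (intro add_left_mono mult_left_mono) (auto simp: t_def nonneg)
  also have "\<dots> = (M + (M * \<nu> (axis j 1) + 1) / \<delta>) * \<nu> x"
    by (simp add: algebra_simps add_divide_distrib)
  finally show ?thesis .
qed

lemma norm_le_on_support:
  assumes "finite S"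
  shows "\<exists>M>0. \<forall>x. {i. x $ i \<noteq> 0} \<subseteq> S \<longrightarrow> norm x \<le> M * \<nu> x"
  using assms
proof (induction S rule: finite_induct)
  case empty
  have "norm x \<le> 1 * \<nu> x" if "{i. x $ i \<noteq> 0} \<subseteq> {}" for x
  proof -
    have "x = 0"
      using that by (simp add: vec_eq_iff)
    then show ?thesis
      by simp
  qed
  then show ?case
    by (intro exI[of _ 1]) simp
next
  case (insert j S)
  obtain M where "0 < M" and M: "\<And>x. {i. x $ i \<noteq> 0} \<subseteq> S \<Longrightarrow> norm x \<le> M * \<nu> x"
    using insert.IH by blast
  obtain \<delta> where "0 < \<delta>" and \<delta>: "\<And>v. {i. v $ i \<noteq> 0} \<subseteq> S \<Longrightarrow> \<delta> \<le> \<nu> (axis j 1 + v)"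
    using axis_dist_support_pos[OF insert.hyps(2) \<open>0 < M\<close> M] by blast
  have "0 < M + (M * \<nu> (axis j 1) + 1) / \<delta>"
    using \<open>0 < M\<close> \<open>0 < \<delta>\<close> by (simp add: nonneg add_pos_nonneg)
  with norm_le_on_insert_support[OF \<open>0 < \<delta>\<close> \<delta> \<open>0 < M\<close> M] show ?case
    by blast
qed

lemma norm_le: "\<exists>M>0. \<forall>x. norm x \<le> M * \<nu> x"
  using norm_le_on_support[of UNIV] by simp

lemma tendsto_zero_if_eventually_le:
  assumes "eventually (\<lambda>k. \<nu> (X k) \<le> u k) F" and "(u \<longlongrightarrow> 0) F"
  shows "(X \<longlongrightarrow> 0) F"
proof -
  obtain M where M: "M > 0" "\<And>x. norm x \<le> M * \<nu> x"
    using norm_le by blast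
  have "eventually (\<lambda>k. norm (X k) \<le> M * u k) F"
    using assms(1) by eventually_elim (meson M order_trans mult_left_mono less_imp_le)
  then show ?thesis
    by (rule Lim_null_comparison) (rule tendsto_mult_right_zero[OF assms(2)])
qed

lemma matrix_vector_le: "\<exists>Q. \<forall>y. \<nu> (A *v y) \<le> Q * \<nu> y"
proof -
  obtain M where M: "M > 0" "\<And>x. norm x \<le> M * \<nu> x"
    using norm_le by blast
  have "\<nu> (A *v y) \<le> (M * (\<Sum>j\<in>UNIV. \<nu> (column j A))) * \<nu> y" for y
  proof -
    have "\<nu> (A *v y) \<le> norm y * (\<Sum>j\<in>UNIV. \<nu> (column j A))"
      unfolding matrix_mult_sum by (rule sum_scaled_le)
    also have "\<dots> \<le> M * \<nu> y * (\<Sum>j\<in>UNIV. \<nu> (column j A))"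
      by (intro mult_right_mono M(2) sum_nonneg nonneg)
    finally show ?thesis
      by (simp add: ac_simps)
  qed
  then show ?thesis
    by blast
qed

lemma le_partial_norm:
  assumes "x \<in> H"
  shows "\<nu> (A *v x) \<le> partial_norm \<nu> H A * \<nu> x"
proof (cases "x = 0")
  case False
  obtain Q where Q: "\<And>y. \<nu> (A *v y) \<le> Q * \<nu> y"
    using matrix_vector_le by blast
  have "bdd_above ((\<lambda>y. \<nu> (A *v y) / \<nu> y) ` (H - {0}))"
    using Q by (intro bdd_aboveI2[of _ _ Q]) (simp add: pos_divide_le_eq pos)
  then have "\<nu> (A *v x) / \<nu> x \<le> partial_norm \<nu> H A"
    unfolding partial_norm_def using assms False by (intro cSUP_upper) auto
  then show ?thesis
    using pos[OF False] by (simp add: pos_divide_le_eq)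
qed simp

lemma partial_norm_nonneg:
  assumes "H - {0} \<noteq> {}"
  shows "0 \<le> partial_norm \<nu> H A"
proof -
  obtain h where h: "h \<in> H" "h \<noteq> 0"
    using assms by blast
  have "0 \<le> partial_norm \<nu> H A * \<nu> h"
    using le_partial_norm[OF h(1), of A] nonneg[of "A *v h"] by linarith
  then show ?thesis
    using pos[OF h(2)] by (simp add: zero_le_mult_iff)
qed

lemma mat_prod_list_le:
  assumes "H - {0} \<noteq> {}" and "\<forall>M\<in>set Ms. \<forall>y\<in>H. M *v y \<in> H" and "x \<in> H"
  shows "\<nu> (mat_prod_list Ms *v x) \<le> prod_list (map (partial_norm \<nu> H) Ms) * \<nu> x"
  using assms(2)
proof (induction Ms)
  case Nil
  then show ?case
    by (simp add: mat_prod_list_def)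
next
  case (Cons M Ms)
  have "\<nu> (mat_prod_list (M # Ms) *v x) = \<nu> (M *v (mat_prod_list Ms *v x))"
    by (simp add: mat_prod_list_def matrix_vector_mul_assoc)
  also have "\<dots> \<le> partial_norm \<nu> H M * \<nu> (mat_prod_list Ms *v x)"
    using mat_prod_list_mult_mem[of Ms H x] Cons.prems assms(3) by (intro le_partial_norm) simp
  also have "\<dots> \<le> partial_norm \<nu> H M * (prod_list (map (partial_norm \<nu> H) Ms) * \<nu> x)"
    using Cons by (intro mult_left_mono partial_norm_nonneg[OF assms(1)]) simp_all
  finally show ?case
    by (simp add: mult.assoc)
qed

end

lemma prod_list_map_permutation:
  assumes "bij_betw \<pi> {1..r} {1..r}"
  shows "prod_list (map (\<lambda>j. f (\<pi> j)) [1..<r + 1]) = (\<Prod>j\<in>{1..r}. f j)"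
proof -
  have "set [1..<r + 1] = {1..r}"
    by auto
  then have "prod_list (map (\<lambda>j. f (\<pi> j)) [1..<r + 1]) = (\<Prod>j\<in>{1..r}. f (\<pi> j))"
    by (metis distinct_upt prod.distinct_set_conv_list)
  also have "\<dots> = (\<Prod>j\<in>{1..r}. f j)"
    by (rule prod.reindex_bij_betw[OF assms])
  finally show ?thesis .
qed

lemma prod_le_exp_sum_minus_one:
  fixes a :: "'i \<Rightarrow> real"
  assumes "\<And>i. i \<in> S \<Longrightarrow> 0 \<le> a i"
  shows "(\<Prod>i\<in>S. a i) \<le> exp (\<Sum>i\<in>S. a i - 1)"
proof (cases "finite S")
  case True
  have "a i \<le> exp (a i - 1)" for i
    using exp_ge_add_one_self[of "a i - 1"] by simp
  then have "(\<Prod>i\<in>S. a i) \<le> (\<Prod>i\<in>S. exp (a i - 1))"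
    using assms by (intro prod_mono) simp
  with True show ?thesis
    by (simp add: exp_sum)
qed simp

lemma summable_rearrange_nonneg:
  fixes f :: "nat \<Rightarrow> real"
  assumes "bij_betw \<sigma> {1..} {1..}" and "\<And>i. 0 \<le> f i"
  shows "summable (\<lambda>k. f (\<sigma> (k + 1))) \<longleftrightarrow> summable (\<lambda>i. f (i + 1))"
proof -
  have shift: "bij_betw (\<lambda>k::nat. k + 1) UNIV {1..}"
    by (rule bij_betw_byWitness[where f'="\<lambda>i. i - 1"]) auto
  have "summable (\<lambda>k. f (\<sigma> (k + 1))) \<longleftrightarrow> (\<lambda>k. f (\<sigma> (k + 1))) summable_on UNIV"
    by (simp add: summable_on_UNIV_nonneg_real_iff assms(2))
  also have "\<dots> \<longleftrightarrow> f summable_on {1..}"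
    using summable_on_reindex_bij_betw[OF bij_betw_trans[OF shift assms(1)]] by (simp add: o_def)
  also have "\<dots> \<longleftrightarrow> (\<lambda>i. f (i + 1)) summable_on UNIV"
    using summable_on_reindex_bij_betw[OF shift, of f] by simp
  also have "\<dots> \<longleftrightarrow> summable (\<lambda>i. f (i + 1))"
    by (simp add: summable_on_UNIV_nonneg_real_iff assms(2))
  finally show ?thesis .
qed

lemma filterlim_partial_sums_at_top:
  fixes f :: "nat \<Rightarrow> real"
  assumes "\<And>k. 0 \<le> f k" and "\<not> summable f"
  shows "filterlim (\<lambda>n. \<Sum>k<n. f k) at_top sequentially"
  unfolding filterlim_at_top
proof
  fix Z :: real
  obtain N where N: "Z \<le> (\<Sum>k<N. f k)"
  proof (rule ccontr)
    assume "\<not> thesis"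
    then have "(\<Sum>k<n. f k) \<le> Z" for n
      using that by (meson not_le less_imp_le)
    then have "summable f"
      using assms(1) by (intro summableI_nonneg_bounded)
    with assms(2) show False ..
  qed
  have "(\<Sum>k<N. f k) \<le> (\<Sum>k<n. f k)" if "n \<ge> N" for n
    using that assms(1) by (intro sum_mono2) auto
  with N show "eventually (\<lambda>n. Z \<le> (\<Sum>k<n. f k)) sequentially"
    unfolding eventually_sequentially by (meson order_trans)
qed

lemma filterlim_sum_minus_one_at_bot:
  fixes c :: "nat \<Rightarrow> real"
  assumes "summable (\<lambda>k. max (c k) 1 - 1)" and "\<not> summable (\<lambda>k. 1 - min (c k) 1)"
  shows "filterlim (\<lambda>n. \<Sum>k<n. c k - 1) at_bot sequentially"
  unfolding filterlim_at_bot
proof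
  fix Z :: real
  let ?excess = "\<lambda>k. max (c k) 1 - 1" and ?deficit = "\<lambda>k. 1 - min (c k) 1"
  have "eventually (\<lambda>n. suminf ?excess - Z \<le> (\<Sum>k<n. ?deficit k)) sequentially"
    using filterlim_partial_sums_at_top[OF _ assms(2)] by (simp add: filterlim_at_top)
  then show "eventually (\<lambda>n. (\<Sum>k<n. c k - 1) \<le> Z) sequentially"
  proof eventually_elim
    case (elim n)
    have "(\<Sum>k<n. c k - 1) = (\<Sum>k<n. ?excess k - ?deficit k)"
      by (intro sum.cong) (auto simp: max_def min_def)
    also have "\<dots> = (\<Sum>k<n. ?excess k) - (\<Sum>k<n. ?deficit k)"
      by (rule sum_subtractf)
    also have "(\<Sum>k<n. ?excess k) \<le> suminf ?excess"
      using assms(1) by (intro sum_le_suminf) auto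
    finally show ?case
      using elim by linarith
  qed
qed

lemma (in vector_norm) mat_prod_list_permutation_le:
  assumes "H - {0} \<noteq> {}" and "\<And>j y. j \<in> {1..r} \<Longrightarrow> y \<in> H \<Longrightarrow> B j *v y \<in> H"
    and "bij_betw \<pi> {1..r} {1..r}" and "x \<in> H"
  shows "\<nu> (mat_prod_list (map (\<lambda>j. B (\<pi> j)) [1..<r + 1]) *v x)
    \<le> exp (\<Sum>k<r. partial_norm \<nu> H (B (k + 1)) - 1) * \<nu> x"
proof -
  let ?Ms = "map (\<lambda>j. B (\<pi> j)) [1..<r + 1]"
  have "\<pi> j \<in> {1..r}" if "j \<in> {1..r}" for j
    using bij_betwE[OF assms(3)] that by blast
  then have "\<forall>M\<in>set ?Ms. \<forall>y\<in>H. M *v y \<in> H"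
    using assms(2) by auto
  then have "\<nu> (mat_prod_list ?Ms *v x) \<le> prod_list (map (partial_norm \<nu> H) ?Ms) * \<nu> x"
    using mat_prod_list_le[OF assms(1) _ assms(4)] by blast
  also have "prod_list (map (partial_norm \<nu> H) ?Ms) = (\<Prod>k<r. partial_norm \<nu> H (B (k + 1)))"
    using prod_list_map_permutation[OF assms(3), of "\<lambda>j. partial_norm \<nu> H (B j)"]
    by (simp add: o_def prod.atLeast1_atMost_eq)
  also have "\<dots> \<le> exp (\<Sum>k<r. partial_norm \<nu> H (B (k + 1)) - 1)"
    using partial_norm_nonneg[OF assms(1)] by (rule prod_le_exp_sum_minus_one)
  finally show ?thesis
    by (simp add: mult_right_mono nonneg)
qed

lemma tendsto_exp_rearranged_sum_zero:
  fixes a :: "nat \<Rightarrow> real"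
  assumes sigma: "bij_betw \<sigma> {1..} {1..}"
    and "summable (\<lambda>i. max (a (i + 1)) 1 - 1)" and "\<not> summable (\<lambda>i. 1 - min (a (i + 1)) 1)"
  shows "(\<lambda>r. exp (\<Sum>k<r. a (\<sigma> (k + p + 1)) - 1)) \<longlonglongrightarrow> 0"
proof -
  have "summable (\<lambda>k. max (a (\<sigma> (k + p + 1))) 1 - 1)"
    using assms(2) summable_rearrange_nonneg[OF sigma, of "\<lambda>i. max (a i) 1 - 1"]
      summable_iff_shift[of "\<lambda>k. max (a (\<sigma> (k + 1))) 1 - 1" p]
    by simp
  moreover have "\<not> summable (\<lambda>k. 1 - min (a (\<sigma> (k + p + 1))) 1)"
    using assms(3) summable_rearrange_nonneg[OF sigma, of "\<lambda>i. 1 - min (a i) 1"]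
      summable_iff_shift[of "\<lambda>k. 1 - min (a (\<sigma> (k + 1))) 1" p]
    by simp
  ultimately have "filterlim (\<lambda>r. \<Sum>k<r. a (\<sigma> (k + p + 1)) - 1) at_bot sequentially"
    by (rule filterlim_sum_minus_one_at_bot)
  then show ?thesis
    by (rule filterlim_compose[OF exp_at_bot])
qed

lemma (in vector_norm) general_product_le:
  assumes "H - {0} \<noteq> {}" and H_inv: "\<And>i y. i \<ge> 1 \<Longrightarrow> y \<in> H \<Longrightarrow> A i *v y \<in> H"
    and sigma: "bij_betw \<sigma> {1..} {1..}" and "bij_betw \<pi> {1..r} {1..r}" and "x \<in> H"
  shows "\<nu> (mat_prod_list (map (\<lambda>j. A (\<sigma> (p + \<pi> j))) [1..<r + 1]) *v x)
    \<le> exp (\<Sum>k<r. partial_norm \<nu> H (A (\<sigma> (k + p + 1))) - 1) * \<nu> x"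
proof -
  have "A (\<sigma> (p + j)) *v y \<in> H" if "j \<in> {1..r}" "y \<in> H" for j y
    using that sigma by (intro H_inv) (auto simp: bij_betw_def)
  then have "\<nu> (mat_prod_list (map (\<lambda>j. A (\<sigma> (p + \<pi> j))) [1..<r + 1]) *v x)
      \<le> exp (\<Sum>k<r. partial_norm \<nu> H (A (\<sigma> (p + (k + 1)))) - 1) * \<nu> x"
    by (rule mat_prod_list_permutation_le[OF assms(1) _ assms(4,5)])
  then show ?thesis
    by (simp add: ac_simps)
qed

theorem corollary3p3:
  fixes A :: "nat \<Rightarrow> 'f::{real_normed_field, banach} ^ 'n ^ 'n"
    and H :: "('f ^ 'n) set"
    and \<nu> :: "'f ^ 'n \<Rightarrow> real"
    and \<sigma> :: "nat \<Rightarrow> nat"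
    and p :: nat
    and C :: "nat \<Rightarrow> 'f ^ 'n ^ 'n"
  assumes H_sub: "vec.subspace H"
    and H_inv: "\<And>i x. i \<ge> 1 \<Longrightarrow> x \<in> H \<Longrightarrow> A i *v x \<in> H"
    and nu: "is_vector_norm \<nu>"
    and conv: "summable (\<lambda>i. max (partial_norm \<nu> H (A (i + 1))) 1 - 1)"
    and div: "\<not> summable (\<lambda>i. 1 - min (partial_norm \<nu> H (A (i + 1))) 1)"
    and sigma: "bij_betw \<sigma> {1..} {1..}"
    and C_def: "\<And>r. r \<ge> 1 \<Longrightarrow> \<exists>\<pi>. bij_betw \<pi> {1..r} {1..r} \<and>
                  C r = mat_prod_list (map (\<lambda>j. A (\<sigma> (p + \<pi> j))) [1..<r + 1])"
  shows "\<forall>x \<in> H. (\<lambda>r. C r *v x) \<longlonglongrightarrow> 0"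
proof
  fix x
  assume x: "x \<in> H"
  show "(\<lambda>r. C r *v x) \<longlonglongrightarrow> 0"
  proof (cases "H - {0} = {}")
    case True
    with x show ?thesis
      by auto
  next
    case False
    interpret vector_norm \<nu>
      by unfold_locales (rule nu)
    let ?u = "\<lambda>r. exp (\<Sum>k<r. partial_norm \<nu> H (A (\<sigma> (k + p + 1))) - 1)"
    have "\<nu> (C r *v x) \<le> ?u r * \<nu> x" if r: "r \<ge> 1" for r
    proof -
      obtain \<pi> where \<pi>: "bij_betw \<pi> {1..r} {1..r}"
        and C_r: "C r = mat_prod_list (map (\<lambda>j. A (\<sigma> (p + \<pi> j))) [1..<r + 1])"
        using C_def[OF r] by blast
      show ?thesis
        unfolding C_r by (rule general_product_le[OF False _ sigma \<pi> x]) (rule H_inv)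
    qed
    then have "eventually (\<lambda>r. \<nu> (C r *v x) \<le> ?u r * \<nu> x) sequentially"
      unfolding eventually_sequentially by blast
    moreover have "(\<lambda>r. ?u r * \<nu> x) \<longlonglongrightarrow> 0"
      using tendsto_exp_rearranged_sum_zero[OF sigma conv div] by (rule tendsto_mult_left_zero)
    ultimately show ?thesis
      by (rule tendsto_zero_if_eventually_le)
  qed
qed

end
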